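(* Let $G=(V,E,w)$ be an edge-weighted graph with positive rational weights and no isolated vertices. The greedy algorithm applied to $U=V$ and the function $h$ returns a WPPIDS $S$ with $|S|\le\big(1+\ln(\delta_{\max}/\delta_{\min})\big)\cdot|S^*|$, where $\delta_{\max}\le\frac32 W$ and $\delta_{\min}\ge 1/L$; in particular $|S|\le\big(1+\ln(\tfrac32\cdot L\cdot W)\big)\cdot|S^*|$, where $S^*$ is a minimum-cardinality WPPIDS.
   Context: $N_A(v)=N(v)\cap A$, $W_A(v)=\sum_{u\in N_A(v)}w_{(v,u)}$, $W(v)=W_V(v)$, $W=\max_{v\in V}W(v)$. $h(A)=\sum_{v\in V}h_A(v)$ with $h_A(v)=W(v)/2$ if $v\in A$ or $W_A(v)\ge W(v)/2$, and $h_A(v)=W_A(v)$ otherwise. For $v$ with incident edge weights $w_1,\dots,w_d$, write $w_0=W(v)/2$ and each $w_i$ as a reduced fraction $p_i/q_i$; $l(v)=\mathrm{lcm}\{q_0,\dots,q_d\}$ and $L=\max_v l(v)$. $\Delta_x h(A)=h(A\cup\{x\})-h(A)$. The greedy algorithm: start with $S=\emptyset$; while some $u\in U\setminus S$ has $\Delta_u h(S)>0$, add to $S$ an element $x\in U\setminus S$ maximizing $\Delta_u h(S)$ (ties arbitrary); return $S$, with chosen elements $s_1,s_2,\dots$ in order, $S_i=\{s_1,\dots,s_i\}$. $\delta_{\max}=\Delta_{s_1}h(\emptyset)$ and $\delta_{\min}=\min_i\Delta_{s_i}h(S_{i-1})$. A WPPIDS is a set $S\subseteq V$ such that every $v\in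 V\setminus S$ satisfies $W_S(v)\ge W(v)/2$. *)

theory Defs
  imports Complex_Main
begin

definition weighted_graph :: "'a set \<Rightarrow> ('a \<Rightarrow> 'a \<Rightarrow> bool) \<Rightarrow> ('a \<Rightarrow> 'a \<Rightarrow> rat) \<Rightarrow> bool" where
  "weighted_graph V E w \<longleftrightarrow> finite V
     \<and> (\<forall>u v. E u v \<longrightarrow> u \<in> V \<and> v \<in> V)
     \<and> (\<forall>u v. E u v \<longrightarrow> E v u)
     \<and> (\<forall>v. \<not> E v v)
     \<and> (\<forall>u v. E u v \<longrightarrow> w u v = w v u \<and> w u v > 0)"

definition no_isolated :: "'a set \<Rightarrow> ('a \<Rightarrow> 'a \<Rightarrow> bool) \<Rightarrow> bool" where
  "no_isolated V E \<longleftrightarrow> (\<forall>v\<in>V. \<exists>u. E v u)"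

definition nbhd :: "'a set \<Rightarrow> ('a \<Rightarrow> 'a \<Rightarrow> bool) \<Rightarrow> 'a \<Rightarrow> 'a set" where
  "nbhd V E v = {u \<in> V. E v u}"

definition WA :: "'a set \<Rightarrow> ('a \<Rightarrow> 'a \<Rightarrow> bool) \<Rightarrow> ('a \<Rightarrow> 'a \<Rightarrow> rat) \<Rightarrow> 'a set \<Rightarrow> 'a \<Rightarrow> rat" where
  "WA V E w A v = (\<Sum>u\<in>nbhd V E v \<inter> A. w v u)"

definition Wv :: "'a set \<Rightarrow> ('a \<Rightarrow> 'a \<Rightarrow> bool) \<Rightarrow> ('a \<Rightarrow> 'a \<Rightarrow> rat) \<Rightarrow> 'a \<Rightarrow> rat" where
  "Wv V E w v = WA V E w V v"

definition Wmax :: "'a set \<Rightarrow> ('a \<Rightarrow> 'a \<Rightarrow> bool) \<Rightarrow> ('a \<Rightarrow> 'a \<Rightarrow> rat) \<Rightarrow> rat" where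
  "Wmax V E w = Max (Wv V E w ` V)"

definition hA :: "'a set \<Rightarrow> ('a \<Rightarrow> 'a \<Rightarrow> bool) \<Rightarrow> ('a \<Rightarrow> 'a \<Rightarrow> rat) \<Rightarrow> 'a set \<Rightarrow> 'a \<Rightarrow> rat" where
  "hA V E w A v = (if v \<in> A \<or> WA V E w A v \<ge> Wv V E w v / 2
                   then Wv V E w v / 2 else WA V E w A v)"

definition h :: "'a set \<Rightarrow> ('a \<Rightarrow> 'a \<Rightarrow> bool) \<Rightarrow> ('a \<Rightarrow> 'a \<Rightarrow> rat) \<Rightarrow> 'a set \<Rightarrow> rat" where
  "h V E w A = (\<Sum>v\<in>V. hA V E w A v)"

definition delta :: "'a set \<Rightarrow> ('a \<Rightarrow> 'a \<Rightarrow> bool) \<Rightarrow> ('a \<Rightarrow> 'a \<Rightarrow> rat) \<Rightarrow> 'a \<Rightarrow> 'a set \<Rightarrow> rat" where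
  "delta V E w x A = h V E w (A \<union> {x}) - h V E w A"

definition denom :: "rat \<Rightarrow> int" where
  "denom r = snd (quotient_of r)"

definition lv :: "'a set \<Rightarrow> ('a \<Rightarrow> 'a \<Rightarrow> bool) \<Rightarrow> ('a \<Rightarrow> 'a \<Rightarrow> rat) \<Rightarrow> 'a \<Rightarrow> int" where
  "lv V E w v = Lcm (denom ` (insert (Wv V E w v / 2) ((\<lambda>u. w v u) ` nbhd V E v)))"

definition Lmax :: "'a set \<Rightarrow> ('a \<Rightarrow> 'a \<Rightarrow> bool) \<Rightarrow> ('a \<Rightarrow> 'a \<Rightarrow> rat) \<Rightarrow> int" where
  "Lmax V E w = Max (lv V E w ` V)"

definition is_WPPIDS :: "'a set \<Rightarrow> ('a \<Rightarrow> 'a \<Rightarrow> bool) \<Rightarrow> ('a \<Rightarrow> 'a \<Rightarrow> rat) \<Rightarrow> 'a set \<Rightarrow> bool" where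
  "is_WPPIDS V E w S \<longleftrightarrow> S \<subseteq> V \<and> (\<forall>v\<in>V - S. WA V E w S v \<ge> Wv V E w v / 2)"

text \<open>A possible execution of the greedy algorithm on U = V and h, with arbitrary tie-breaking:
  the list ss = [s_1, s_2, ...] of chosen elements in order; S_i = set (take i ss).\<close>
definition greedy_run :: "'a set \<Rightarrow> ('a \<Rightarrow> 'a \<Rightarrow> bool) \<Rightarrow> ('a \<Rightarrow> 'a \<Rightarrow> rat) \<Rightarrow> 'a list \<Rightarrow> bool" where
  "greedy_run V E w ss \<longleftrightarrow>
     (\<forall>i < length ss.
        ss ! i \<in> V - set (take i ss)
      \<and> delta V E w (ss ! i) (set (take i ss)) > 0
      \<and> (\<forall>u \<in> V - set (take i ss). delta V E w u (set (take i ss)) \<le> delta V E w (ss ! i) (set (take i ss))))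
   \<and> (\<forall>u \<in> V - set ss. \<not> delta V E w u (set ss) > 0)"

definition delta_max :: "'a set \<Rightarrow> ('a \<Rightarrow> 'a \<Rightarrow> bool) \<Rightarrow> ('a \<Rightarrow> 'a \<Rightarrow> rat) \<Rightarrow> 'a list \<Rightarrow> rat" where
  "delta_max V E w ss = delta V E w (ss ! 0) {}"

definition delta_min :: "'a set \<Rightarrow> ('a \<Rightarrow> 'a \<Rightarrow> bool) \<Rightarrow> ('a \<Rightarrow> 'a \<Rightarrow> rat) \<Rightarrow> 'a list \<Rightarrow> rat" where
  "delta_min V E w ss = Min ((\<lambda>i. delta V E w (ss ! i) (set (take i ss))) ` {..<length ss})"

end

theory Submission
  imports Defs
begin

(* The function h is a sum over the vertices v of min (W(v)/2) (W_A(v)), replaced by W(v)/2 once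
   v is in A: truncations of modular functions, hence h is monotone submodular.  It attains its
   maximum, the sum of the W(v)/2, on every superset of a WPPIDS.  So the residuals
   r_i = max h - h(S_i) of a greedy run satisfy r_i - r_(i+1) = delta_i >= delta_min and, by
   submodularity and greedy choice, r_i <= m * delta_i with m = |S*|.  This is Wolsey's setting:
   the potential F(x) = x / delta_min for x <= m * delta_min and m (1 + ln (x / (m * delta_min)))
   beyond increases by at least 1 at every greedy step, while F(r_0) <= m (1 + ln (delta_max /
   delta_min)).  Finally delta_max <= W(s_1)/2 + W(s_1), and every positive gain is a positive
   multiple of 1/l(v) at some vertex v, whence delta_min >= 1/L. *)

section \<open>Wolsey's bound for greedy residuals\<close>

definition greedy_potential :: "real \<Rightarrow> real \<Rightarrow> real \<Rightarrow> real" where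
  "greedy_potential m c x = (if x \<le> m * c then x / c else m + m * ln (x / (m * c)))"

lemma one_minus_div_le_ln_div:
  fixes x y :: real
  assumes "0 < x" "0 < y"
  shows "1 - y / x \<le> ln (x / y)"
proof -
  have "ln (y / x) \<le> y / x - 1" using assms by (intro ln_le_minus_one) simp
  moreover have "ln (y / x) = - ln (x / y)" using assms by (simp add: ln_div)
  ultimately show ?thesis by linarith
qed

lemma greedy_potential_step:
  fixes m c d x :: real
  assumes c: "0 < c" and m: "0 < m" and "c \<le> d" and "0 \<le> x - d" and "x \<le> m * d"
  shows "1 \<le> greedy_potential m c x - greedy_potential m c (x - d)"
proof -
  let ?F = "greedy_potential m c" and ?y = "x - d"
  have d: "0 < d" and x: "0 < x" using assms by linarith+
  have md_x: "1 \<le> m * d / x" using \<open>x \<le> m * d\<close> x by simp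
  consider "x \<le> m * c" | "?y \<le> m * c" "m * c < x" | "m * c < ?y" by linarith
  then show ?thesis
  proof cases
    case 1
    then have "?F x - ?F ?y = d / c" using d by (simp add: greedy_potential_def diff_divide_distrib)
    then show ?thesis using \<open>c \<le> d\<close> c by simp
  next
    case 2
    have "m * (1 - m * c / x) \<le> m * ln (x / (m * c))"
      using m c x by (intro mult_left_mono one_minus_div_le_ln_div) auto
    moreover have "m + m * (1 - m * c / x) - ?y / c - m * d / x = (m * c - ?y) * (x - m * c) / (c * x)"
      using c x by (simp add: field_simps)
    moreover have "0 \<le> (m * c - ?y) * (x - m * c) / (c * x)" using 2 c x by simp
    moreover have "?F x - ?F ?y = m + m * ln (x / (m * c)) - ?y / c"
      using 2 by (simp add: greedy_potential_def)
    ultimately show ?thesis using md_x by linarith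
  next
    case 3
    have mc: "0 < m * c" using m c by simp
    then have y_pos: "0 < ?y" using 3 by linarith
    have "?F x - ?F ?y = m * (ln (x / (m * c)) - ln (?y / (m * c)))"
      using 3 d by (simp add: greedy_potential_def algebra_simps)
    also have "ln (x / (m * c)) - ln (?y / (m * c)) = ln (x / ?y)"
      using m c x y_pos by (simp add: ln_div)
    finally have "?F x - ?F ?y = m * ln (x / ?y)" .
    moreover have "m * (1 - ?y / x) \<le> m * ln (x / ?y)"
      using 3 m mc x by (intro mult_left_mono one_minus_div_le_ln_div) auto
    moreover have "m * (1 - ?y / x) = m * d / x" using x by (simp add: field_simps)
    ultimately show ?thesis using md_x by linarith
  qed
qed

lemma greedy_potential_le:
  fixes m c t x :: real
  assumes c: "0 < c" and m: "0 < m" and "c \<le> t" and x: "0 < x" and "x \<le> m * t"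
  shows "greedy_potential m c x \<le> m * (1 + ln (t / c))"
proof (cases "x \<le> m * c")
  case True
  then have "greedy_potential m c x \<le> m" using c by (simp add: greedy_potential_def field_simps)
  moreover have "0 \<le> ln (t / c)" using \<open>c \<le> t\<close> c by simp
  ultimately show ?thesis using m by (simp add: algebra_simps add_increasing2)
next
  case False
  have "ln (x / (m * c)) \<le> ln (m * t / (m * c))"
    using assms by (intro ln_mono divide_right_mono) auto
  also have "m * t / (m * c) = t / c" using m by simp
  finally show ?thesis using False m by (simp add: greedy_potential_def algebra_simps mult_left_mono)
qed

lemma greedy_residual_bound:
  fixes t r :: "nat \<Rightarrow> real" and c m :: real and k :: nat
  assumes k: "0 < k" and c: "0 < c" and t_ge: "\<And>i. i < k \<Longrightarrow> c \<le> t i"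
    and r_step: "\<And>i. i < k \<Longrightarrow> r i = t i + r (Suc i)" and r_k: "r k = 0"
    and r_le: "\<And>i. i < k \<Longrightarrow> r i \<le> m * t i"
  shows "real k \<le> m * (1 + ln (t 0 / c))"
proof -
  let ?F = "greedy_potential m c"
  have r_nonneg: "0 \<le> r i" if "i \<le> k" for i
    using that
  proof (induction rule: inc_induct)
    case (step i)
    then show ?case using r_step[of i] t_ge[of i] c by simp
  qed (use r_k in simp)
  have r_0: "0 < r 0" using r_step[OF k] t_ge[OF k] r_nonneg[of 1] k c by simp
  have m: "0 < m"
    using r_0 r_le[OF k] t_ge[OF k] c by (metis mult_nonpos_nonneg not_le order.trans less_le_not_le)
  have "real j \<le> ?F (r 0) - ?F (r j)" if "j \<le> k" for j
    using that
  proof (induction j)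
    case (Suc j)
    have "1 \<le> ?F (r j) - ?F (r (Suc j))"
      using greedy_potential_step[OF c m t_ge, of j "r j"] r_step[of j] r_le[of j]
        r_nonneg[of "Suc j"] Suc.prems
      by simp
    then show ?case using Suc by simp
  qed simp
  moreover have "?F (r k) = 0" using r_k m c by (simp add: greedy_potential_def)
  ultimately have "real k \<le> ?F (r 0)" by fastforce
  also have "\<dots> \<le> m * (1 + ln (t 0 / c))"
    using greedy_potential_le[OF c m t_ge[OF k] r_0 r_le[OF k]] .
  finally show ?thesis .
qed

section \<open>Submodular set functions\<close>

definition submodular :: "('a set \<Rightarrow> 'b::ordered_ab_group_add) \<Rightarrow> bool" where
  "submodular f \<longleftrightarrow> (\<forall>A B x. A \<subseteq> B \<longrightarrow> x \<notin> B \<longrightarrow> f (insert x B) - f B \<le> f (insert x A) - f A)"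

lemma submodularD:
  "submodular f \<Longrightarrow> A \<subseteq> B \<Longrightarrow> x \<notin> B \<Longrightarrow> f (insert x B) - f B \<le> f (insert x A) - f A"
  unfolding submodular_def by blast

lemma submodular_sum:
  assumes "\<And>i. i \<in> I \<Longrightarrow> submodular (g i)"
  shows "submodular (\<lambda>A. \<Sum>i\<in>I. g i A)"
  unfolding submodular_def sum_subtractf[symmetric]
  using assms by (blast intro: sum_mono submodularD)

lemma submodular_of_rat: "submodular f \<Longrightarrow> submodular (\<lambda>A. real_of_rat (f A))"
  unfolding submodular_def by (simp add: of_rat_diff[symmetric] of_rat_less_eq)

lemma submodular_union_le:
  assumes f: "submodular f" and "finite T"
  shows "f (A \<union> T) - f A \<le> (\<Sum>x\<in>T. f (insert x A) - f A)"
  using \<open>finite T\<close>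
proof (induction T rule: finite_induct)
  case (insert y T)
  have "f (insert y (A \<union> T)) - f (A \<union> T) \<le> f (insert y A) - f A"
  proof (cases "y \<in> A")
    case False
    then show ?thesis using insert.hyps by (intro submodularD[OF f]) auto
  qed (simp add: insert_absorb)
  then have "f (insert y (A \<union> T)) - f (A \<union> T) + (f (A \<union> T) - f A)
      \<le> f (insert y A) - f A + (\<Sum>x\<in>T. f (insert x A) - f A)"
    using insert.IH by (rule add_mono)
  then show ?case using insert.hyps by simp
qed simp

lemma greedy_submodular_length_le:
  fixes f :: "'a set \<Rightarrow> real" and ss :: "'a list" and T :: "'a set" and c M :: real
  assumes f: "submodular f" and T: "finite T" and ss: "ss \<noteq> []" and c: "0 < c"
    and gain_ge: "\<And>i. i < length ss \<Longrightarrow>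
      c \<le> f (insert (ss ! i) (set (take i ss))) - f (set (take i ss))"
    and greedy: "\<And>i x. i < length ss \<Longrightarrow> x \<in> T \<Longrightarrow>
      f (insert x (set (take i ss))) - f (set (take i ss))
        \<le> f (insert (ss ! i) (set (take i ss))) - f (set (take i ss))"
    and saturated: "\<And>A. f (A \<union> T) = M" and reaches: "f (set ss) = M"
  shows "real (length ss) \<le> real (card T) * (1 + ln ((f {ss ! 0} - f {}) / c))"
proof -
  define S where "S i = set (take i ss)" for i
  define t where "t i = f (insert (ss ! i) (S i)) - f (S i)" for i
  have "real (length ss) \<le> real (card T) * (1 + ln (t 0 / c))"
  proof (rule greedy_residual_bound[where r = "\<lambda>i. M - f (S i)"])
    show "M - f (S i) = t i + (M - f (S (Suc i)))" if "i < length ss" for i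
      using that by (simp add: S_def t_def take_Suc_conv_app_nth)
    show "M - f (S (length ss)) = 0" using reaches by (simp add: S_def)
    show "M - f (S i) \<le> real (card T) * t i" if i: "i < length ss" for i
    proof -
      have "M - f (S i) \<le> (\<Sum>x\<in>T. f (insert x (S i)) - f (S i))"
        using submodular_union_le[OF f T, of "S i"] saturated by simp
      also have "\<dots> \<le> (\<Sum>x\<in>T. t i)"
        using greedy[OF i] by (intro sum_mono) (simp add: S_def t_def)
      finally show ?thesis by simp
    qed
  qed (use ss c gain_ge in \<open>simp_all add: S_def t_def\<close>)
  then show ?thesis by (simp add: t_def S_def)
qed

section \<open>The function h\<close>

lemma nbhd_subset: "nbhd V E v \<subseteq> V"
  by (auto simp: nbhd_def)

lemma finite_nbhd: "weighted_graph V E w \<Longrightarrow> finite (nbhd V E v)"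
  by (auto simp: nbhd_def weighted_graph_def)

lemma weight_pos: "weighted_graph V E w \<Longrightarrow> u \<in> nbhd V E v \<Longrightarrow> 0 < w v u"
  by (auto simp: nbhd_def weighted_graph_def)

lemma WA_nonneg: "weighted_graph V E w \<Longrightarrow> 0 \<le> WA V E w A v"
  unfolding WA_def by (auto intro: sum_nonneg less_imp_le dest: weight_pos)

lemma WA_mono:
  assumes "weighted_graph V E w" and "A \<subseteq> B"
  shows "WA V E w A v \<le> WA V E w B v"
  unfolding WA_def using assms
  by (intro sum_mono2) (auto simp: finite_nbhd intro: less_imp_le dest: weight_pos)

lemma WA_insert:
  assumes "weighted_graph V E w" and "x \<notin> A"
  shows "WA V E w (insert x A) v = WA V E w A v + (if x \<in> nbhd V E v then w v x else 0)"
proof -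
  have "nbhd V E v \<inter> insert x A
      = (if x \<in> nbhd V E v then insert x (nbhd V E v \<inter> A) else nbhd V E v \<inter> A)"
    by auto
  then show ?thesis using assms by (simp add: WA_def finite_nbhd)
qed

lemma Wv_eq_sum_nbhd: "Wv V E w v = (\<Sum>u\<in>nbhd V E v. w v u)"
  by (simp add: Wv_def WA_def Int_absorb2 nbhd_subset)

lemma Wv_pos:
  assumes G: "weighted_graph V E w" and "no_isolated V E" and "v \<in> V"
  shows "0 < Wv V E w v"
proof -
  obtain u where "E v u" using assms by (auto simp: no_isolated_def)
  then have "u \<in> nbhd V E v" using G by (auto simp: nbhd_def weighted_graph_def)
  then show ?thesis
    unfolding Wv_eq_sum_nbhd using G by (intro sum_pos2) (auto simp: finite_nbhd less_imp_le weight_pos)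
qed

lemma hA_eq_min:
  "hA V E w A v = (if v \<in> A then Wv V E w v / 2 else min (Wv V E w v / 2) (WA V E w A v))"
  by (simp add: hA_def min_def)

lemma hA_le: "hA V E w A v \<le> Wv V E w v / 2"
  by (simp add: hA_def)

lemma hA_mono:
  assumes "weighted_graph V E w" and "A \<subseteq> B"
  shows "hA V E w A v \<le> hA V E w B v"
  using WA_mono[OF assms, of v] assms(2) by (auto simp: hA_eq_min)

lemma hA_submodular:
  assumes G: "weighted_graph V E w"
  shows "submodular (\<lambda>A. hA V E w A v)"
  unfolding submodular_def
proof (intro allI impI)
  fix A B :: "'a set" and x :: 'a
  assume AB: "A \<subseteq> B" and x: "x \<notin> B"
  let ?c = "Wv V E w v / 2" and ?d = "if x \<in> nbhd V E v then w v x else 0"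
  have d: "0 \<le> ?d" using weight_pos[OF G] by (simp add: less_imp_le)
  have WA_AB: "WA V E w A v \<le> WA V E w B v" by (rule WA_mono[OF G AB])
  have "WA V E w (insert x A) v = WA V E w A v + ?d" "WA V E w (insert x B) v = WA V E w B v + ?d"
    using x AB by (metis WA_insert[OF G] subsetD)+
  moreover have "hA V E w A v \<le> hA V E w (insert x A) v" by (rule hA_mono[OF G]) auto
  ultimately show "hA V E w (insert x B) v - hA V E w B v \<le> hA V E w (insert x A) v - hA V E w A v"
    using AB d WA_AB by (auto simp: hA_eq_min min_def)
qed

lemma h_submodular: "weighted_graph V E w \<Longrightarrow> submodular (h V E w)"
  unfolding h_def[abs_def] by (intro submodular_sum hA_submodular)

lemma delta_eq_sum: "delta V E w x A = (\<Sum>v\<in>V. hA V E w (insert x A) v - hA V E w A v)"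
  by (simp add: delta_def h_def sum_subtractf)

lemma h_superset_of_WPPIDS:
  assumes G: "weighted_graph V E w" and S: "is_WPPIDS V E w S" and "S \<subseteq> B"
  shows "h V E w B = (\<Sum>v\<in>V. Wv V E w v / 2)"
  unfolding h_def
proof (rule sum.cong[OF refl])
  fix v assume "v \<in> V"
  then have "v \<in> B \<or> Wv V E w v / 2 \<le> WA V E w S v" using S \<open>S \<subseteq> B\<close> by (auto simp: is_WPPIDS_def)
  then show "hA V E w B v = Wv V E w v / 2"
    using WA_mono[OF G \<open>S \<subseteq> B\<close>, of v] by (auto simp: hA_def)
qed

lemma delta_pos_if_underdominated:
  assumes G: "weighted_graph V E w" and "v \<in> V" "v \<notin> A"
    and "WA V E w A v < Wv V E w v / 2"
  shows "0 < delta V E w v A"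
proof -
  have "0 < hA V E w (insert v A) v - hA V E w A v" using assms by (simp add: hA_def)
  also have "\<dots> \<le> delta V E w v A" unfolding delta_eq_sum using assms G
    by (intro member_le_sum) (auto simp: weighted_graph_def intro: hA_mono[OF G])
  finally show ?thesis .
qed

section \<open>Greedy runs\<close>

lemma greedy_run_subset: "greedy_run V E w ss \<Longrightarrow> set ss \<subseteq> V"
  by (auto simp: greedy_run_def in_set_conv_nth)

lemma greedy_run_gain_pos:
  "greedy_run V E w ss \<Longrightarrow> i < length ss \<Longrightarrow> 0 < delta V E w (ss ! i) (set (take i ss))"
  by (simp add: greedy_run_def)

lemma greedy_run_WPPIDS:
  assumes G: "weighted_graph V E w" and run: "greedy_run V E w ss"
  shows "is_WPPIDS V E w (set ss)"
  unfolding is_WPPIDS_def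
proof (intro conjI ballI)
  show "set ss \<subseteq> V" using greedy_run_subset[OF run] .
  fix v assume v: "v \<in> V - set ss"
  then have "\<not> 0 < delta V E w v (set ss)" using run by (simp add: greedy_run_def)
  then show "Wv V E w v / 2 \<le> WA V E w (set ss) v"
    using delta_pos_if_underdominated[OF G] v by force
qed

lemma greedy_run_nonempty:
  assumes G: "weighted_graph V E w" and "V \<noteq> {}" and "no_isolated V E" and run: "greedy_run V E w ss"
  shows "ss \<noteq> []"
proof
  assume "ss = []"
  obtain v where v: "v \<in> V" using \<open>V \<noteq> {}\<close> by blast
  have "Wv V E w v / 2 \<le> WA V E w {} v"
    using greedy_run_WPPIDS[OF G run] \<open>ss = []\<close> v by (simp add: is_WPPIDS_def)
  then show False using Wv_pos[OF G \<open>no_isolated V E\<close> v] by (simp add: WA_def)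
qed

lemma delta_min_le_gain:
  "i < length ss \<Longrightarrow> delta_min V E w ss \<le> delta V E w (ss ! i) (set (take i ss))"
  unfolding delta_min_def by (intro Min_le) auto

lemma delta_min_attained:
  assumes "ss \<noteq> []"
  obtains i where "i < length ss" "delta_min V E w ss = delta V E w (ss ! i) (set (take i ss))"
proof -
  have "delta_min V E w ss \<in> (\<lambda>i. delta V E w (ss ! i) (set (take i ss))) ` {..<length ss}"
    unfolding delta_min_def using assms by (intro Min_in) auto
  then show ?thesis using that by blast
qed

lemma greedy_run_delta_min_pos:
  assumes "greedy_run V E w ss" and "ss \<noteq> []"
  shows "0 < delta_min V E w ss"
  using assms by (metis greedy_run_gain_pos delta_min_attained)

lemma greedy_run_card_le:
  assumes G: "weighted_graph V E w" and run: "greedy_run V E w ss" and ss: "ss \<noteq> []"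
    and opt: "is_WPPIDS V E w Sstar"
  shows "real (card (set ss))
    \<le> (1 + ln (real_of_rat (delta_max V E w ss) / real_of_rat (delta_min V E w ss))) * real (card Sstar)"
proof -
  let ?f = "\<lambda>A. real_of_rat (h V E w A)" and ?S = "\<lambda>i. set (take i ss)"
  have delta_real: "real_of_rat (delta V E w x A) = ?f (insert x A) - ?f A" for x A
    by (simp add: delta_def of_rat_diff)
  have "finite Sstar"
    using opt G finite_subset by (auto simp: is_WPPIDS_def weighted_graph_def)
  have "real (length ss)
      \<le> real (card Sstar) * (1 + ln ((?f {ss ! 0} - ?f {}) / real_of_rat (delta_min V E w ss)))"
  proof (rule greedy_submodular_length_le[where M = "real_of_rat (\<Sum>v\<in>V. Wv V E w v / 2)"])
    show "submodular ?f" using h_submodular[OF G] by (rule submodular_of_rat)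
    show "real_of_rat (delta_min V E w ss) \<le> ?f (insert (ss ! i) (?S i)) - ?f (?S i)"
      if "i < length ss" for i
      using delta_min_le_gain[OF that] by (simp add: delta_real[symmetric] of_rat_less_eq)
    show "?f (insert x (?S i)) - ?f (?S i) \<le> ?f (insert (ss ! i) (?S i)) - ?f (?S i)"
      if i: "i < length ss" and x: "x \<in> Sstar" for i x
    proof (cases "x \<in> ?S i")
      case True
      then show ?thesis using run i
        by (simp add: greedy_run_def insert_absorb delta_real[symmetric] less_imp_le)
    next
      case False
      then have "x \<in> V - ?S i" using opt x by (auto simp: is_WPPIDS_def)
      then show ?thesis using run i by (simp add: greedy_run_def delta_real[symmetric] of_rat_less_eq)
    qed
    show "?f (A \<union> Sstar) = real_of_rat (\<Sum>v\<in>V. Wv V E w v / 2)" for A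
      using h_superset_of_WPPIDS[OF G opt] by simp
    show "?f (set ss) = real_of_rat (\<Sum>v\<in>V. Wv V E w v / 2)"
      using h_superset_of_WPPIDS[OF G greedy_run_WPPIDS[OF G run]] by simp
  qed (use \<open>finite Sstar\<close> ss greedy_run_delta_min_pos[OF run ss] in simp_all)
  moreover have "real (card (set ss)) \<le> real (length ss)" by (simp add: card_length)
  ultimately show ?thesis by (simp add: delta_max_def delta_real mult.commute)
qed

section \<open>Bounds on the greedy gains\<close>

lemma hA_nonneg: "weighted_graph V E w \<Longrightarrow> 0 \<le> hA V E w A v"
  using WA_nonneg[of V E w A v] WA_nonneg[of V E w V v] by (simp add: hA_eq_min Wv_def)

lemma WA_singleton:
  assumes G: "weighted_graph V E w" and "s \<in> V" and "v \<in> V"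
  shows "WA V E w {s} v = (if v \<in> nbhd V E s then w s v else 0)"
proof -
  have "nbhd V E v \<inter> {s} = (if v \<in> nbhd V E s then {s} else {})"
    using G assms by (auto simp: nbhd_def weighted_graph_def)
  moreover have "v \<in> nbhd V E s \<Longrightarrow> w v s = w s v"
    using G by (auto simp: nbhd_def weighted_graph_def)
  ultimately show ?thesis by (simp add: WA_def)
qed

lemma sum_WA_singleton:
  assumes G: "weighted_graph V E w" and "s \<in> V"
  shows "(\<Sum>v\<in>V. WA V E w {s} v) = Wv V E w s"
proof -
  have "(\<Sum>v\<in>V. WA V E w {s} v) = (\<Sum>v\<in>V. if v \<in> nbhd V E s then w s v else 0)"
    using assms by (intro sum.cong) (auto simp: WA_singleton)
  also have "\<dots> = (\<Sum>v\<in>nbhd V E s. w s v)"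
    using G nbhd_subset[of V E s] by (simp add: sum.If_cases weighted_graph_def Int_absorb1)
  finally show ?thesis by (simp add: Wv_eq_sum_nbhd)
qed

lemma delta_empty_le_Wmax:
  assumes G: "weighted_graph V E w" and s: "s \<in> V"
  shows "delta V E w s {} \<le> 3/2 * Wmax V E w"
proof -
  have fin: "finite V" using G by (simp add: weighted_graph_def)
  have hA_s: "hA V E w {s} v \<le> (if v = s then Wv V E w s / 2 else 0) + WA V E w {s} v" for v
    using hA_le[of V E w "{s}" s] WA_nonneg[OF G, of "{s}" s] hA_eq_min[of V E w "{s}" v]
    by (auto simp: min_def)
  have "0 \<le> h V E w {}" unfolding h_def by (intro sum_nonneg hA_nonneg[OF G])
  then have "delta V E w s {} \<le> h V E w {s}" by (simp add: delta_def)
  also have "\<dots> \<le> (\<Sum>v\<in>V. (if v = s then Wv V E w s / 2 else 0) + WA V E w {s} v)"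
    unfolding h_def using hA_s by (rule sum_mono)
  also have "\<dots> = Wv V E w s / 2 + Wv V E w s"
    using fin s by (simp add: sum.distrib sum_WA_singleton[OF G s])
  also have "Wv V E w s \<le> Wmax V E w" unfolding Wmax_def using fin s by simp
  finally show ?thesis by simp
qed

lemma mult_denom_dvd_Ints: "denom r dvd n \<Longrightarrow> r * of_int n \<in> \<int>"
proof -
  assume "denom r dvd n"
  obtain p q where pq: "quotient_of r = (p, q)" by (cases "quotient_of r")
  then obtain j where "n = q * j" using \<open>denom r dvd n\<close> by (auto simp: denom_def elim: dvdE)
  moreover have "q > 0" "r = of_int p / of_int q"
    using quotient_of_denom_pos'[of r] quotient_of_div[OF pq] pq by simp_all
  ultimately have "r * of_int n = of_int (p * j)" by simp
  then show ?thesis by simp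
qed

lemma inverse_le_if_mult_Ints:
  fixes q :: "'a::linordered_field"
  assumes "0 < q" and "0 < l" and "q * of_int l \<in> \<int>"
  shows "1 / of_int l \<le> q"
proof -
  obtain z where z: "q * of_int l = of_int z" using assms(3) by (auto elim: Ints_cases)
  then have "0 < z" using assms(1,2) by (metis mult_pos_pos of_int_0_less_iff)
  then have "1 \<le> q * of_int l" using z by simp
  then show ?thesis using assms(2) by (simp add: field_simps)
qed

lemma lv_pos: "weighted_graph V E w \<Longrightarrow> 0 < lv V E w v"
proof -
  assume G: "weighted_graph V E w"
  let ?D = "denom ` insert (Wv V E w v / 2) (w v ` nbhd V E v)"
  have "finite ?D" using finite_nbhd[OF G] by simp
  moreover have "0 \<notin> ?D"
    by (metis denom_def imageE less_irrefl quotient_of_denom_pos')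
  ultimately have "Lcm ?D \<noteq> 0" by (simp add: Lcm_0_iff)
  then show ?thesis unfolding lv_def using Lcm_int_greater_eq_0[of ?D] by linarith
qed

lemma lv_le_Lmax: "weighted_graph V E w \<Longrightarrow> v \<in> V \<Longrightarrow> lv V E w v \<le> Lmax V E w"
  unfolding Lmax_def weighted_graph_def by simp

lemma hA_mult_lv_Ints:
  assumes G: "weighted_graph V E w"
  shows "hA V E w A v * of_int (lv V E w v) \<in> \<int>"
proof -
  have denom_dvd: "denom r dvd lv V E w v" if "r \<in> insert (Wv V E w v / 2) (w v ` nbhd V E v)" for r
    unfolding lv_def using that by (intro dvd_Lcm imageI)
  have "WA V E w A v * of_int (lv V E w v) = (\<Sum>u\<in>nbhd V E v \<inter> A. w v u * of_int (lv V E w v))"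
    by (simp add: WA_def sum_distrib_right)
  also have "\<dots> \<in> \<int>" by (intro Ints_sum mult_denom_dvd_Ints denom_dvd) auto
  finally show ?thesis
    using mult_denom_dvd_Ints[OF denom_dvd[of "Wv V E w v / 2"]] by (simp add: hA_def)
qed

lemma delta_ge_inverse_Lmax:
  assumes G: "weighted_graph V E w" and pos: "0 < delta V E w x A"
  shows "1 / of_int (Lmax V E w) \<le> delta V E w x A"
proof -
  let ?gain = "\<lambda>v. hA V E w (insert x A) v - hA V E w A v"
  have fin: "finite V" using G by (simp add: weighted_graph_def)
  have gain_nonneg: "0 \<le> ?gain v" for v using hA_mono[OF G, of A "insert x A" v] by auto
  obtain v where v: "v \<in> V" "0 < ?gain v"
    using pos sum_nonpos[of V ?gain] unfolding delta_eq_sum by (meson not_le)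
  have lv: "0 < lv V E w v" by (rule lv_pos[OF G])
  have "1 / of_int (Lmax V E w) \<le> (1 / of_int (lv V E w v) :: rat)"
    using lv lv_le_Lmax[OF G v(1)] by (simp add: frac_le)
  also have "\<dots> \<le> ?gain v"
    using v(2) lv hA_mult_lv_Ints[OF G, of "insert x A" v] hA_mult_lv_Ints[OF G, of A v]
    by (intro inverse_le_if_mult_Ints) (auto simp: left_diff_distrib)
  also have "\<dots> \<le> delta V E w x A"
    unfolding delta_eq_sum using v fin gain_nonneg by (intro member_le_sum) auto
  finally show ?thesis .
qed

lemma ln_div_le_ln_div:
  fixes a a' b b' :: real
  assumes "0 < a" "a \<le> a'" "0 < b'" "b' \<le> b"
  shows "ln (a / b) \<le> ln (a' / b')"
  using assms by (intro ln_mono frac_le) auto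

lemma Lmax_pos: "weighted_graph V E w \<Longrightarrow> V \<noteq> {} \<Longrightarrow> 0 < Lmax V E w"
  using lv_pos lv_le_Lmax by (metis all_not_in_conv order_less_le_trans)

theorem mainTheorem14:
  fixes V :: "'a set" and E :: "'a \<Rightarrow> 'a \<Rightarrow> bool" and w :: "'a \<Rightarrow> 'a \<Rightarrow> rat"
    and ss :: "'a list" and Sstar :: "'a set"
  assumes G: "weighted_graph V E w"
    and nonempty: "V \<noteq> {}"
    and noiso: "no_isolated V E"
    and run: "greedy_run V E w ss"
    and opt: "is_WPPIDS V E w Sstar"
    and min: "\<forall>T. is_WPPIDS V E w T \<longrightarrow> card Sstar \<le> card T"
  shows "is_WPPIDS V E w (set ss)
    \<and> real (card (set ss)) \<le> (1 + ln (real_of_rat (delta_max V E w ss) / real_of_rat (delta_min V E w ss))) * real (card Sstar)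
    \<and> delta_max V E w ss \<le> 3/2 * Wmax V E w
    \<and> delta_min V E w ss \<ge> 1 / of_int (Lmax V E w)
    \<and> real (card (set ss)) \<le> (1 + ln (3/2 * real_of_int (Lmax V E w) * real_of_rat (Wmax V E w))) * real (card Sstar)"
proof -
  have ss: "ss \<noteq> []" using greedy_run_nonempty[OF G nonempty noiso run] .
  then have "0 < length ss" by simp
  then have "ss ! 0 \<in> V" and dmax_pos: "0 < delta_max V E w ss"
    using greedy_run_subset[OF run] greedy_run_gain_pos[OF run, of 0] by (auto simp: delta_max_def)
  then have dmax: "delta_max V E w ss \<le> 3/2 * Wmax V E w"
    unfolding delta_max_def using delta_empty_le_Wmax[OF G] by blast
  obtain i where "i < length ss" "delta_min V E w ss = delta V E w (ss ! i) (set (take i ss))"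
    using delta_min_attained[OF ss] .
  then have dmin: "1 / of_int (Lmax V E w) \<le> delta_min V E w ss"
    using greedy_run_delta_min_pos[OF run ss] by (simp add: delta_ge_inverse_Lmax[OF G])
  have "ln (real_of_rat (delta_max V E w ss) / real_of_rat (delta_min V E w ss))
      \<le> ln (real_of_rat (3/2 * Wmax V E w) / real_of_rat (1 / of_int (Lmax V E w)))"
    using dmax_pos dmax dmin Lmax_pos[OF G nonempty]
    by (intro ln_div_le_ln_div) (simp_all add: of_rat_less_eq)
  then have "(1 + ln (real_of_rat (delta_max V E w ss) / real_of_rat (delta_min V E w ss))) * real (card Sstar)
      \<le> (1 + ln (3/2 * real_of_int (Lmax V E w) * real_of_rat (Wmax V E w))) * real (card Sstar)"
    by (intro mult_right_mono) (simp_all add: of_rat_mult of_rat_divide mult_ac)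
  then show ?thesis
    using greedy_run_WPPIDS[OF G run] greedy_run_card_le[OF G run ss opt] dmax dmin by linarith
qed

end
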